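(* For every $w\in\mathfrak B$, $$\langle\nabla R(w),\,w-w^\star\rangle\ge\frac1{10}\|w-w^\star\|^2.$$
   Context: $\|w^\star\|=1$. $R$ is the population risk of learning a ReLU unit, whose gradient at $w\ne0$ is $\nabla R(w)=\frac12(w-w^\star)+\frac1{2\pi}(\theta w^\star-\hat w\sin\theta)$, where $\hat w=w/\|w\|$ and $\theta\in[0,\pi]$ is the angle between $w$ and $w^\star$ ($\cos\theta=\hat w^\top w^\star$). $\mathfrak B=\{w:w^\top w^\star\ge1/\sqrt d\}\cap\{w:\|w\|\le2\}$. *)

theory Defs
  imports "HOL-Analysis.Analysis"
begin

text \<open>Angle between w and w* (w* a unit vector), in [0,pi].\<close>
definition relu_angle :: "'a::euclidean_space \<Rightarrow> 'a \<Rightarrow> real" where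
  "relu_angle wstar w = arccos ((w /\<^sub>R norm w) \<bullet> wstar)"

text \<open>Gradient of the population risk of learning a ReLU unit, for w \<noteq> 0.\<close>
definition relu_grad :: "'a::euclidean_space \<Rightarrow> 'a \<Rightarrow> 'a" where
  "relu_grad wstar w =
     (let \<theta> = relu_angle wstar w; what = w /\<^sub>R norm w in
      (1/2) *\<^sub>R (w - wstar) + (1 / (2*pi)) *\<^sub>R (\<theta> *\<^sub>R wstar - sin \<theta> *\<^sub>R what))"

definition regionB :: "'a::euclidean_space \<Rightarrow> 'a set" where
  "regionB wstar = {w. w \<bullet> wstar \<ge> 1 / sqrt (real DIM('a))} \<inter> {w. norm w \<le> 2}"

end

theory Submission
  imports Defs
begin

text \<open>
  Write \<open>r = \<parallel>w\<parallel>\<close> and \<open>\<theta>\<close> for the angle between \<open>w\<close> and \<open>w\<^sup>\<star>\<close>. In the plane spanned by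
  the two vectors, \<open>\<parallel>w - w\<^sup>\<star>\<parallel>\<^sup>2 = (r - cos \<theta>)\<^sup>2 + sin\<^sup>2 \<theta>\<close> and
  \<open>2\<pi> \<langle>\<nabla>R(w), w - w\<^sup>\<star>\<rangle> = \<pi> \<parallel>w - w\<^sup>\<star>\<parallel>\<^sup>2 + \<theta> (r cos \<theta> - 1) - sin \<theta> (r - cos \<theta>)\<close>,
  so the claim is a two-variable inequality. On \<open>\<B>\<close> we have \<open>r \<le> 2\<close> and
  \<open>0 \<le> \<theta> \<le> \<pi>/2\<close>. The correction term is controlled by \<open>sin \<theta> \<le> \<theta>\<close> when
  \<open>r cos \<theta> \<ge> 1\<close> and by the half-angle bound \<open>\<theta> (1 + cos \<theta>) \<le> 2 sin \<theta>\<close> when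
  \<open>r cos \<theta> < 1\<close>; in both cases what remains is elementary algebra in \<open>cos \<theta>\<close> and
  \<open>sin \<theta>\<close>, using \<open>0.8\<pi> > 2.4\<close>.
\<close>

lemma mult_one_plus_cos_le_two_sin:
  fixes x :: real
  assumes "0 \<le> x" "x < pi"
  shows "x * (1 + cos x) \<le> 2 * sin x"
proof -
  have cos_gt: "cos x > -1"
    using cos_monotone_0_pi[of x pi] assms by simp
  have tan_half_x: "tan (x/2) = sin x / (1 + cos x)"
    using tan_half[of "x/2"] by (simp add: add.commute)
  have "arctan (tan (x/2)) = x/2"
    using assms pi_gt_zero by (intro arctan_tan) linarith+
  moreover have "tan (x/2) \<ge> 0"
    unfolding tan_half_x using cos_gt sin_ge_zero[of x] assms by simp
  ultimately have "x/2 \<le> tan (x/2)"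
    using arctan_le_self[of "tan (x/2)"] by linarith
  hence "x/2 \<le> sin x / (1 + cos x)"
    unfolding tan_half_x .
  thus ?thesis
    using cos_gt by (simp add: divide_simps)
qed

lemma circle_bound_overshoot:
  fixes r c s :: real
  assumes "r \<le> 2" "0 \<le> c" "c \<le> 1" "0 \<le> s" "s\<^sup>2 = 1 - c\<^sup>2" "r * c \<ge> 1"
  shows "s * (r + 1) * (1 - c) \<le> 2.4 * ((r - c)\<^sup>2 + s\<^sup>2)"
proof -
  have "r * c \<le> 2 * c"
    using assms by (intro mult_right_mono) auto
  hence c_half: "c \<ge> 1/2"
    using assms by linarith
  have r_pos: "r \<ge> 0"
    using assms(2,6) mult_nonpos_nonneg[of r c] by linarith
  have s_le_1: "s \<le> 1"
    using assms(4,5) power2_le_imp_le[of s 1] by simp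
  have "(1 - c) * (3/2) \<le> (1 - c) * (1 + c)"
    using c_half assms by (intro mult_left_mono) auto
  also have "\<dots> = s\<^sup>2"
    using assms(5) by (simp add: power2_eq_square algebra_simps)
  finally have "1 - c \<le> 2/3 * s\<^sup>2"
    by simp
  hence "s * (r + 1) * (1 - c) \<le> s * (r + 1) * (2/3 * s\<^sup>2)"
    using r_pos assms(4) by (intro mult_left_mono) auto
  also have "\<dots> \<le> s * 3 * (2/3 * s\<^sup>2)"
    using assms(1,4) by (intro mult_right_mono mult_left_mono) auto
  also have "\<dots> = 2 * s\<^sup>2 * s"
    by (simp add: power2_eq_square)
  also have "\<dots> \<le> 2 * s\<^sup>2"
    using s_le_1 mult_left_mono[of s 1 "2 * s\<^sup>2"] by simp
  also have "\<dots> \<le> 2.4 * ((r - c)\<^sup>2 + s\<^sup>2)"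
    by simp
  finally show ?thesis .
qed

lemma circle_bound_undershoot:
  fixes r c s :: real
  assumes "0 \<le> c" "c \<le> 1" "0 \<le> s" "s\<^sup>2 = 1 - c\<^sup>2"
  shows "s * (1 - c) * (r + 2 + c) \<le> 2.4 * (1 + c) * ((r - c)\<^sup>2 + s\<^sup>2)"
proof -
  define a where "a = r - c"
  have s_le_1: "s \<le> 1"
    using assms(3,4) power2_le_imp_le[of s 1] by simp
  have "s * (1 - c) * (r + 2 + c) = s * (1 - c) * a + 2 * s * ((1 - c) * (1 + c))"
    by (simp add: a_def algebra_simps)
  also have "(1 - c) * (1 + c) = s\<^sup>2"
    using assms(4) by (simp add: power2_eq_square algebra_simps)
  finally have split: "s * (1 - c) * (r + 2 + c) = s * (1 - c) * a + 2 * s\<^sup>2 * s"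
    by (simp add: power2_eq_square)
  have "s * (1 - c) * a \<le> s * (1 - c) * \<bar>a\<bar>"
    using assms(2,3) by (intro mult_left_mono) auto
  also have "\<dots> \<le> s * \<bar>a\<bar>"
    using assms(1,3) by (intro mult_right_mono) (auto intro: mult_left_le)
  also have "\<dots> \<le> 2.4 * a\<^sup>2 + 5/48 * s\<^sup>2"
  proof -
    have "0 \<le> 2.4 * (\<bar>a\<bar> - s / 4.8)\<^sup>2"
      by simp
    thus ?thesis
      by (simp add: power2_eq_square algebra_simps)
  qed
  finally have cross: "s * (1 - c) * a \<le> 2.4 * a\<^sup>2 + 5/48 * s\<^sup>2" .
  have cube: "2 * s\<^sup>2 * s \<le> 2 * s\<^sup>2"
    using s_le_1 mult_left_mono[of s 1 "2 * s\<^sup>2"] by simp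
  have "s * (1 - c) * (r + 2 + c) \<le> 2.4 * a\<^sup>2 + 5/48 * s\<^sup>2 + 2 * s\<^sup>2"
    using split cross cube by linarith
  also have "\<dots> \<le> 2.4 * (a\<^sup>2 + s\<^sup>2)"
    by simp
  also have "\<dots> \<le> 2.4 * (1 + c) * (a\<^sup>2 + s\<^sup>2)"
    using assms(1) by (intro mult_right_mono) auto
  finally show ?thesis
    unfolding a_def .
qed

lemma relu_angle_term_lower_bound:
  fixes r \<theta> :: real
  assumes "r \<le> 2" "0 \<le> \<theta>" "\<theta> \<le> pi/2"
  shows "\<theta> * (r * cos \<theta> - 1) - sin \<theta> * (r - cos \<theta>) \<ge> - (4/5 * pi) * ((r - cos \<theta>)\<^sup>2 + (sin \<theta>)\<^sup>2)"
    (is "?T \<ge> - (4/5 * pi) * ?D")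
proof -
  define c s where "c = cos \<theta>" and "s = sin \<theta>"
  have c: "0 \<le> c" "c \<le> 1"
    unfolding c_def using assms(2,3) by (auto intro: cos_ge_zero)
  have s: "0 \<le> s" "s\<^sup>2 = 1 - c\<^sup>2"
    unfolding c_def s_def using assms(2,3) pi_gt_zero by (auto intro: sin_ge_zero simp: sin_squared_eq)
  have "2.4 * ?D \<le> 4/5 * pi * ?D"
    using pi_gt3 by (intro mult_right_mono) auto
  moreover have "- ?T \<le> 2.4 * ?D"
  proof (cases "r * c \<ge> 1")
    case True
    have "s * (r * c - 1) \<le> \<theta> * (r * c - 1)"
      using True sin_x_le_x[OF assms(2)] unfolding s_def by (intro mult_right_mono) auto
    moreover have "- (s * (r * c - 1) - s * (r - c)) = s * (r + 1) * (1 - c)"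
      by (simp add: algebra_simps)
    ultimately show ?thesis
      using circle_bound_overshoot[OF assms(1) c s(1,2) True] unfolding c_def s_def by linarith
  next
    case False
    have "\<theta> < pi"
      using assms(3) pi_gt_zero by linarith
    hence "\<theta> * (1 + c) \<le> 2 * s"
      unfolding c_def s_def using assms(2) by (rule mult_one_plus_cos_le_two_sin[rotated])
    hence "\<theta> * (1 + c) * (1 - r * c) \<le> 2 * s * (1 - r * c)"
      using False by (intro mult_right_mono) auto
    hence "(1 + c) * - ?T \<le> s * (1 - c) * (r + 2 + c)"
      unfolding c_def[symmetric] s_def[symmetric] by (simp add: algebra_simps)
    also have "\<dots> \<le> (1 + c) * (2.4 * ?D)"
      using circle_bound_undershoot[OF c s, of r] unfolding c_def s_def by (metis mult.assoc mult.commute)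
    finally show ?thesis
      using c by (simp add: mult_le_cancel_left_pos)
  qed
  ultimately show ?thesis
    by linarith
qed

lemma inner_unit_direction_bounds:
  fixes wstar w :: "'a::euclidean_space"
  assumes "norm wstar = 1"
  shows "-1 \<le> (w /\<^sub>R norm w) \<bullet> wstar" "(w /\<^sub>R norm w) \<bullet> wstar \<le> 1"
proof -
  have "\<bar>(w /\<^sub>R norm w) \<bullet> wstar\<bar> \<le> norm (w /\<^sub>R norm w)"
    using Cauchy_Schwarz_ineq2[of "w /\<^sub>R norm w" wstar] assms by simp
  also have "\<dots> \<le> 1"
    by (cases "w = 0") simp_all
  finally show "-1 \<le> (w /\<^sub>R norm w) \<bullet> wstar" "(w /\<^sub>R norm w) \<bullet> wstar \<le> 1"
    by linarith+
qed

lemma cos_relu_angle: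
  fixes wstar w :: "'a::euclidean_space"
  assumes "norm wstar = 1"
  shows "cos (relu_angle wstar w) = (w /\<^sub>R norm w) \<bullet> wstar"
  unfolding relu_angle_def using inner_unit_direction_bounds[OF assms] by simp

lemma relu_angle_bounds:
  fixes wstar w :: "'a::euclidean_space"
  assumes "norm wstar = 1" "w \<bullet> wstar \<ge> 0"
  shows "0 \<le> relu_angle wstar w" "relu_angle wstar w \<le> pi/2"
proof -
  have "0 \<le> (w /\<^sub>R norm w) \<bullet> wstar"
    using assms(2) by simp
  with inner_unit_direction_bounds[OF assms(1), of w]
  show "0 \<le> relu_angle wstar w" "relu_angle wstar w \<le> pi/2"
    unfolding relu_angle_def by (simp_all only: arccos_lbound arccos_le_pi2)
qed

lemma inner_eq_norm_mult_cos_relu_angle: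
  fixes wstar w :: "'a::euclidean_space"
  assumes "norm wstar = 1"
  shows "w \<bullet> wstar = norm w * cos (relu_angle wstar w)"
  unfolding cos_relu_angle[OF assms] by (cases "w = 0") simp_all

lemma norm_diff_relu_angle:
  fixes wstar w :: "'a::euclidean_space"
  assumes "norm wstar = 1"
  shows "(norm (w - wstar))\<^sup>2 = (norm w - cos (relu_angle wstar w))\<^sup>2 + (sin (relu_angle wstar w))\<^sup>2"
proof -
  let ?\<theta> = "relu_angle wstar w"
  have "(norm (w - wstar))\<^sup>2 = (norm w)\<^sup>2 - 2 * (w \<bullet> wstar) + (norm wstar)\<^sup>2"
    by (simp add: power2_norm_eq_inner inner_diff_left inner_diff_right inner_commute)
  also have "\<dots> = (norm w)\<^sup>2 - 2 * norm w * cos ?\<theta> + (cos ?\<theta>)\<^sup>2 + (sin ?\<theta>)\<^sup>2"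
    using inner_eq_norm_mult_cos_relu_angle[OF assms, of w] assms by simp
  finally show ?thesis
    by (simp add: power2_diff)
qed

lemma inner_relu_grad_diff:
  fixes wstar w :: "'a::euclidean_space"
  assumes "norm wstar = 1"
  defines "\<theta> \<equiv> relu_angle wstar w"
  shows "relu_grad wstar w \<bullet> (w - wstar) =
    (1/2) * (norm (w - wstar))\<^sup>2 + (\<theta> * (norm w * cos \<theta> - 1) - sin \<theta> * (norm w - cos \<theta>)) / (2*pi)"
proof -
  have along_wstar: "wstar \<bullet> (w - wstar) = norm w * cos \<theta> - 1"
    using inner_eq_norm_mult_cos_relu_angle[OF assms(1), of w] assms(1)
    by (simp add: \<theta>_def inner_diff_right inner_commute dot_square_norm)
  have along_w: "(w /\<^sub>R norm w) \<bullet> (w - wstar) = norm w - cos \<theta>"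
    unfolding \<theta>_def cos_relu_angle[OF assms(1)] inner_diff_right
    by (cases "w = 0") (simp_all add: dot_square_norm power2_eq_square)
  have "relu_grad wstar w =
      (1/2) *\<^sub>R (w - wstar) + (1 / (2*pi)) *\<^sub>R (\<theta> *\<^sub>R wstar - sin \<theta> *\<^sub>R (w /\<^sub>R norm w))"
    unfolding relu_grad_def Let_def \<theta>_def ..
  then have "relu_grad wstar w \<bullet> (w - wstar) = (1/2) * ((w - wstar) \<bullet> (w - wstar))
      + (1 / (2*pi)) * (\<theta> * (wstar \<bullet> (w - wstar)) - sin \<theta> * ((w /\<^sub>R norm w) \<bullet> (w - wstar)))"
    by (simp only: inner_add_left inner_scaleR_left inner_diff_left[of "\<theta> *\<^sub>R wstar"])
  then show ?thesis
    unfolding along_wstar along_w by (simp add: power2_norm_eq_inner)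
qed

theorem mainTheorem15:
  fixes wstar w :: "'a::euclidean_space"
  assumes "norm wstar = 1"
    and "w \<in> regionB wstar"
  shows "relu_grad wstar w \<bullet> (w - wstar) \<ge> (1/10) * (norm (w - wstar))\<^sup>2"
proof -
  define \<theta> where "\<theta> = relu_angle wstar w"
  have "w \<bullet> wstar \<ge> 0" and norm_w: "norm w \<le> 2"
    using assms(2) unfolding regionB_def by (auto intro: order_trans[rotated])
  then have "0 \<le> \<theta>" "\<theta> \<le> pi/2"
    unfolding \<theta>_def using relu_angle_bounds[OF assms(1)] by auto
  then have "\<theta> * (norm w * cos \<theta> - 1) - sin \<theta> * (norm w - cos \<theta>) \<ge> - (4/5 * pi) * (norm (w - wstar))\<^sup>2"
    using relu_angle_term_lower_bound[OF norm_w] norm_diff_relu_angle[OF assms(1), of w]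
    unfolding \<theta>_def by simp
  then have "(\<theta> * (norm w * cos \<theta> - 1) - sin \<theta> * (norm w - cos \<theta>)) / (2*pi) \<ge> - (2/5) * (norm (w - wstar))\<^sup>2"
    using pi_gt_zero by (simp add: field_simps)
  then show ?thesis
    unfolding inner_relu_grad_diff[OF assms(1)] \<theta>_def[symmetric] by linarith
qed

end
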